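(* Let $\hat U_i=\mathrm{sign}(Y_i-\hat Q(X_i))$. Then $$\hat\psi_{\mathrm T}^+\le\frac{\mathbb P_n(Y-\hat Q(X))Z\big(1+\Lambda^{\hat U}(1-\hat e(X))/\hat e(X)\big)+\mathbb P_n\hat Q(X)Z/\hat e(X)}{\mathbb P_nZ/\hat e(X)}.$$
   Context: Data $(X_i,Y_i,Z_i)_{i\le n}$; $\mathbb P_n f=\frac1n\sum_if(X_i,Y_i,Z_i)$; $\Lambda\ge1$, $\tau=\Lambda/(\Lambda+1)$; $\hat e(X_i)\in(0,1)$ for all $i$; $\hat Q:\mathcal X\to\mathbb R$ is an estimate of the conditional $\tau$-quantile of $Y$ given $X$ and $Z=1$; $\mathrm{sign}(0)=0$. $\mathcal E_n(\Lambda)=\{\bar e\in\mathbb R^n:\Lambda^{-1}\le\frac{\bar e_i/(1-\bar e_i)}{\hat e(X_i)/(1-\hat e(X_i))}\le\Lambda\ \forall i\}$, and $\hat\psi_{\mathrm T}^+=\max_{\bar e\in\mathcal E_n(\Lambda)}\frac{\sum_iY_iZ_i/\bar e_i}{\sum_iZ_i/\bar e_i}$ subject to $\frac1n\sum_i\hat Q(X_i)Z_i/\bar e_i=\frac1n\sum_i\hat Q(X_i)Z_i/\hat e(X_i)$ and $\frac1n\sum_iZ_i/\bar e_i=\frac1n\sum_iZ_i/\hat e(X_i)$. *)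

theory Defs
  imports Complex_Main
begin

definition Pn :: "nat \<Rightarrow> (nat \<Rightarrow> real) \<Rightarrow> real" where
  "Pn n f = (\<Sum>i<n. f i) / real n"

definition En :: "nat \<Rightarrow> real \<Rightarrow> (nat \<Rightarrow> real) \<Rightarrow> (nat \<Rightarrow> real) set" where
  "En n Lam eh = {eb. \<forall>i<n.
      inverse Lam \<le> (eb i / (1 - eb i)) / (eh i / (1 - eh i)) \<and>
      (eb i / (1 - eb i)) / (eh i / (1 - eh i)) \<le> Lam}"

text \<open>Feasible set of the optimisation problem defining psi_T^+ (eh i = ehat(X_i), q i = Qhat(X_i)).\<close>
definition feasT :: "nat \<Rightarrow> real \<Rightarrow> (nat \<Rightarrow> real) \<Rightarrow> (nat \<Rightarrow> real) \<Rightarrow> (nat \<Rightarrow> real)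
    \<Rightarrow> (nat \<Rightarrow> real) set" where
  "feasT n Lam eh q Z = {eb \<in> En n Lam eh.
      Pn n (\<lambda>i. q i * Z i / eb i) = Pn n (\<lambda>i. q i * Z i / eh i) \<and>
      Pn n (\<lambda>i. Z i / eb i) = Pn n (\<lambda>i. Z i / eh i)}"

definition psiT_plus :: "nat \<Rightarrow> real \<Rightarrow> (nat \<Rightarrow> real) \<Rightarrow> (nat \<Rightarrow> real) \<Rightarrow> (nat \<Rightarrow> real)
    \<Rightarrow> (nat \<Rightarrow> real) \<Rightarrow> real" where
  "psiT_plus n Lam eh q Y Z =
     Sup ((\<lambda>eb. (\<Sum>i<n. Y i * Z i / eb i) / (\<Sum>i<n. Z i / eb i)) ` feasT n Lam eh q Z)"

end

theory Submission
  imports Defs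
begin

text \<open>If a feasible propensity e' has odds ratio r relative to e = ehat(X), then
  1/e' = 1 + (1 - e)/(r e) with 1/Lambda <= r <= Lambda. So the residual term (Y - Qhat(X)) Z / e'
  is largest for r = 1/Lambda when the residual is positive and for r = Lambda when it is negative.
  The two moment constraints fix the denominator and the Qhat-part of the numerator, so every
  feasible ratio is bounded by the right-hand side.\<close>

definition odds :: "real \<Rightarrow> real" where
  "odds p = p / (1 - p)"

lemma odds_pos_iff: "0 < odds p \<longleftrightarrow> 0 < p \<and> p < 1"
  unfolding odds_def zero_less_divide_iff by linarith

lemma inverse_eq_one_plus_inverse_odds:
  assumes "0 < p" "p < 1"
  shows "1 / p = 1 + 1 / odds p"
  using assms unfolding odds_def by (simp add: field_simps)

lemma inverse_bounds_of_odds_ratio: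
  fixes Lam b e :: real
  assumes Lam: "0 < Lam" and e: "0 < e" "e < 1"
    and lower: "inverse Lam \<le> odds b / odds e" and upper: "odds b / odds e \<le> Lam"
  shows "1 + inverse Lam * ((1 - e) / e) \<le> 1 / b" and "1 / b \<le> 1 + Lam * ((1 - e) / e)"
proof -
  define r where "r = odds b / odds e"
  have odds_e: "0 < odds e" using e by (simp add: odds_pos_iff)
  have r_lower: "inverse Lam \<le> r" and r_upper: "r \<le> Lam" using lower upper by (simp_all add: r_def)
  have r: "0 < r" using r_lower Lam by (meson inverse_positive_iff_positive less_le_trans)
  have "odds b = r * odds e" unfolding r_def using odds_e by simp
  then have "0 < odds b" using r odds_e by simp
  then have "0 < b" "b < 1" by (simp_all add: odds_pos_iff)
  then have inv_b: "1 / b = 1 + inverse r * ((1 - e) / e)"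
    using e \<open>odds b = r * odds e\<close>
    by (simp add: inverse_eq_one_plus_inverse_odds) (simp add: odds_def field_simps)
  have c: "0 \<le> (1 - e) / e" using e by simp
  have "inverse Lam \<le> inverse r" using r_upper r by (rule le_imp_inverse_le)
  moreover have "inverse r \<le> Lam"
    using le_imp_inverse_le[OF r_lower] Lam by simp
  ultimately show "1 + inverse Lam * ((1 - e) / e) \<le> 1 / b" and "1 / b \<le> 1 + Lam * ((1 - e) / e)"
    unfolding inv_b using c by (simp_all only: add_left_mono mult_right_mono)
qed

lemma mult_le_sgn_powr_bound:
  fixes Lam c d u w :: real
  assumes Lam: "0 < Lam" and w: "0 \<le> w"
    and lower: "1 + inverse Lam * c \<le> d" and upper: "d \<le> 1 + Lam * c"
  shows "u * w * d \<le> u * w * (1 + Lam powr sgn u * c)"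
proof (cases u "0::real" rule: linorder_cases)
  case less
  then have "Lam powr sgn u = inverse Lam" using Lam by (simp add: powr_minus)
  then show ?thesis using less w lower by (simp add: mult_left_mono_neg mult_nonpos_nonneg)
next
  case greater
  then have "Lam powr sgn u = Lam" using Lam by simp
  then show ?thesis using greater w upper by (simp add: mult_left_mono)
qed simp

lemma sum_eq_if_Pn_eq:
  assumes "Pn n f = Pn n g"
  shows "(\<Sum>i<n. f i) = (\<Sum>i<n. g i)"
  using assms unfolding Pn_def by (cases "n = 0") simp_all

lemma Pn_add_divide_Pn:
  "(Pn n f + Pn n g) / Pn n h = (\<Sum>i<n. f i + g i) / (\<Sum>i<n. h i)"
  unfolding Pn_def by (cases "n = 0") (simp_all add: sum.distrib add_divide_distrib[symmetric])

lemma self_mem_feasT: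
  assumes "1 \<le> Lam" and "\<forall>i<n. 0 < eh i \<and> eh i < 1"
  shows "eh \<in> feasT n Lam eh q Z"
proof -
  have "inverse Lam \<le> 1" using assms(1) by (simp add: inverse_le_1_iff)
  moreover have "\<forall>i<n. eh i / (1 - eh i) \<noteq> 0" using assms(2) by auto
  ultimately show ?thesis unfolding feasT_def En_def using assms(1) by auto
qed

lemma feasT_ratio_le:
  fixes Lam :: real and eh eb q Y Z :: "nat \<Rightarrow> real"
  assumes Lam: "0 < Lam" and eh: "\<forall>i<n. 0 < eh i \<and> eh i < 1" and Z: "\<forall>i<n. 0 \<le> Z i"
    and eb: "eb \<in> feasT n Lam eh q Z"
  shows "(\<Sum>i<n. Y i * Z i / eb i) / (\<Sum>i<n. Z i / eb i)
    \<le> (\<Sum>i<n. (Y i - q i) * Z i * (1 + Lam powr sgn (Y i - q i) * (1 - eh i) / eh i)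
              + q i * Z i / eh i) / (\<Sum>i<n. Z i / eh i)"
proof -
  have q_moment: "(\<Sum>i<n. q i * Z i / eb i) = (\<Sum>i<n. q i * Z i / eh i)"
    and Z_moment: "(\<Sum>i<n. Z i / eb i) = (\<Sum>i<n. Z i / eh i)"
    using eb unfolding feasT_def by (auto intro: sum_eq_if_Pn_eq)
  have residual: "(Y i - q i) * Z i / eb i
      \<le> (Y i - q i) * Z i * (1 + Lam powr sgn (Y i - q i) * (1 - eh i) / eh i)" if "i < n" for i
  proof -
    have "inverse Lam \<le> odds (eb i) / odds (eh i)" "odds (eb i) / odds (eh i) \<le> Lam"
      using eb \<open>i < n\<close> unfolding feasT_def En_def odds_def by auto
    from inverse_bounds_of_odds_ratio[OF Lam _ _ this] have
      "(Y i - q i) * Z i * (1 / eb i)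
        \<le> (Y i - q i) * Z i * (1 + Lam powr sgn (Y i - q i) * ((1 - eh i) / eh i))"
      using eh Z \<open>i < n\<close> by (intro mult_le_sgn_powr_bound) (auto simp: Lam)
    then show ?thesis by simp
  qed
  have "(\<Sum>i<n. Y i * Z i / eb i) = (\<Sum>i<n. (Y i - q i) * Z i / eb i + q i * Z i / eb i)"
    by (simp add: add_divide_distrib[symmetric] algebra_simps)
  also have "\<dots> = (\<Sum>i<n. (Y i - q i) * Z i / eb i) + (\<Sum>i<n. q i * Z i / eh i)"
    by (simp add: sum.distrib q_moment)
  also have "\<dots> \<le> (\<Sum>i<n. (Y i - q i) * Z i * (1 + Lam powr sgn (Y i - q i) * (1 - eh i) / eh i)
              + q i * Z i / eh i)"
    by (simp add: sum.distrib) (rule sum_mono, simp add: residual)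
  finally show ?thesis
    unfolding Z_moment using eh Z by (intro divide_right_mono sum_nonneg) auto
qed

theorem lemma2:
  fixes n :: nat and X :: "nat \<Rightarrow> 'x" and Y Z :: "nat \<Rightarrow> real"
    and ehat Qhat :: "'x \<Rightarrow> real" and Lam :: real
  assumes "Lam \<ge> 1"
    and "\<forall>i<n. 0 < ehat (X i) \<and> ehat (X i) < 1"
    and "\<forall>i<n. Z i = 0 \<or> Z i = 1"
  shows "psiT_plus n Lam (\<lambda>i. ehat (X i)) (\<lambda>i. Qhat (X i)) Y Z
    \<le> (Pn n (\<lambda>i. (Y i - Qhat (X i)) * Z i *
            (1 + Lam powr (sgn (Y i - Qhat (X i))) * (1 - ehat (X i)) / ehat (X i)))
        + Pn n (\<lambda>i. Qhat (X i) * Z i / ehat (X i)))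
       / Pn n (\<lambda>i. Z i / ehat (X i))"
proof -
  have Z: "\<forall>i<n. 0 \<le> Z i" using assms(3) by auto
  have Lam: "0 < Lam" using assms(1) by simp
  show ?thesis
    unfolding psiT_plus_def Pn_add_divide_Pn
    using self_mem_feasT[OF assms(1,2), of "\<lambda>i. Qhat (X i)" Z] feasT_ratio_le[OF Lam assms(2) Z]
    by (intro cSup_least) auto
qed

end
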